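(* There is an absolute constant $c>0$ such that every ordered tree $T$ with maximum degree $d\ge 1$ has a 3D arc diagram drawing with base plane $\mathcal{P}_1=\{z=0\}$ whose perpendicular projection onto $\mathcal{P}_1$ is a straight-line drawing of $T$ (each arc projecting onto the segment joining its endpoints) and whose angular resolution is at least $c/\sqrt{d}$.
   Context: An ordered tree is a tree together with a prescribed cyclic ordering of the edges around each vertex. A 3D arc diagram drawing of $T$ with base plane $\mathcal{P}_1=\{z=0\}$ is a placement of the vertices at distinct points of $\mathcal{P}_1$, together with, for each edge $e=(a,b)$, a circular arc (a contiguous subset of a circle; a straight segment is allowed as the degenerate case) with endpoints at the positions of $a$ and $b$, such that: the arc lies in the plane $\mathcal{P}_2$ containing the segment $ab$ and perpendicular to $\mathcal{P}_1$; all arcs lie in the closed half-space $z\ge 0$; and the arc forms the same angle $\alpha_e\in[0,\pi/2]$ with the segment $ab$ at both of its endpoints. The angle between two arcs incident to a common vertex $v$ is the angle in $[0,\pi]$ between their tangent rays at $v$ (directed into the arcs). The angular resolution of the drawing is the minimum of this angle over all vertices $v$ and all pairs of distinct edges incident to $v$. *)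

theory Defs
  imports "HOL-Analysis.Analysis"
begin

definition nbrs :: "'a set set \<Rightarrow> 'a \<Rightarrow> 'a set" where
  "nbrs E v = {u. {v, u} \<in> E}"

definition is_tree :: "'a set \<Rightarrow> 'a set set \<Rightarrow> bool" where
  "is_tree V E \<longleftrightarrow> finite V \<and> V \<noteq> {} \<and>
     (\<forall>e\<in>E. \<exists>u v. e = {u, v} \<and> u \<noteq> v \<and> u \<in> V \<and> v \<in> V) \<and>
     (\<forall>u\<in>V. \<forall>v\<in>V. (u, v) \<in> {(x, y). {x, y} \<in> E}\<^sup>*) \<and>
     card E = card V - 1"

definition is_rotation_system :: "'a set \<Rightarrow> 'a set set \<Rightarrow> ('a \<Rightarrow> 'a \<Rightarrow> 'a) \<Rightarrow> bool" where
  "is_rotation_system V E \<sigma> \<longleftrightarrow>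
     (\<forall>v\<in>V. bij_betw (\<sigma> v) (nbrs E v) (nbrs E v) \<and>
        (\<forall>u\<in>nbrs E v. \<forall>w\<in>nbrs E v. \<exists>k. (\<sigma> v ^^ k) u = w))"

definition ordered_tree :: "'a set \<Rightarrow> 'a set set \<Rightarrow> ('a \<Rightarrow> 'a \<Rightarrow> 'a) \<Rightarrow> bool" where
  "ordered_tree V E \<sigma> \<longleftrightarrow> is_tree V E \<and> is_rotation_system V E \<sigma>"

definition max_degree :: "'a set \<Rightarrow> 'a set set \<Rightarrow> nat" where
  "max_degree V E = Max ((\<lambda>v. card (nbrs E v)) ` V)"

text \<open>Planar straight-line drawing of an ordered tree in the base plane (identified with the
  complex plane): distinct vertex positions, segments of distinct edges meet only in common
  endpoints, no vertex lies on a non-incident edge, and around each vertex the neighbours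
  appear in counterclockwise order according to the rotation system.\<close>
definition straight_line_drawing ::
  "'a set \<Rightarrow> 'a set set \<Rightarrow> ('a \<Rightarrow> 'a \<Rightarrow> 'a) \<Rightarrow> ('a \<Rightarrow> complex) \<Rightarrow> bool" where
  "straight_line_drawing V E \<sigma> p \<longleftrightarrow>
     inj_on p V \<and>
     (\<forall>e\<in>E. \<forall>w\<in>V. w \<notin> e \<longrightarrow> p w \<notin> convex hull (p ` e)) \<and>
     (\<forall>e\<in>E. \<forall>f\<in>E. e \<noteq> f \<longrightarrow> convex hull (p ` e) \<inter> convex hull (p ` f) \<subseteq> p ` (e \<inter> f)) \<and>
     (\<forall>v\<in>V. \<forall>u\<in>nbrs E v. \<forall>x\<in>nbrs E v. x \<noteq> u \<longrightarrow>
        Arg2pi ((p (\<sigma> v u) - p v) / (p u - p v)) \<le> Arg2pi ((p x - p v) / (p u - p v)))"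

text \<open>3D arc diagram with base plane z = 0: vertex v sits at (Re (p v), Im (p v), 0); edge
  e = {a,b} is drawn as the circular arc in the vertical plane through a b, lying in z \<ge> 0,
  making angle alpha e in [0, pi/2] with the segment ab at both endpoints. Its tangent ray at
  the endpoint v (towards the other endpoint u) is given below.\<close>
definition arc_tangent :: "('a \<Rightarrow> complex) \<Rightarrow> real \<Rightarrow> 'a \<Rightarrow> 'a \<Rightarrow> real^3" where
  "arc_tangent p a v u =
     (let h = (p u - p v) / of_real (cmod (p u - p v))
      in vector [cos a * Re h, cos a * Im h, sin a])"

definition vec_angle :: "real^3 \<Rightarrow> real^3 \<Rightarrow> real" where
  "vec_angle x y = arccos ((x \<bullet> y) / (norm x * norm y))"

definition arc_diagram_drawing ::
  "'a set \<Rightarrow> 'a set set \<Rightarrow> ('a \<Rightarrow> complex) \<Rightarrow> ('a set \<Rightarrow> real) \<Rightarrow> bool" where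
  "arc_diagram_drawing V E p \<alpha> \<longleftrightarrow> inj_on p V \<and> (\<forall>e\<in>E. 0 \<le> \<alpha> e \<and> \<alpha> e \<le> pi / 2)"

definition angular_resolution_ge ::
  "'a set \<Rightarrow> 'a set set \<Rightarrow> ('a \<Rightarrow> complex) \<Rightarrow> ('a set \<Rightarrow> real) \<Rightarrow> real \<Rightarrow> bool" where
  "angular_resolution_ge V E p \<alpha> r \<longleftrightarrow>
     (\<forall>v\<in>V. \<forall>u\<in>nbrs E v. \<forall>w\<in>nbrs E v. u \<noteq> w \<longrightarrow>
        r \<le> vec_angle (arc_tangent p (\<alpha> {v, u}) v u) (arc_tangent p (\<alpha> {v, w}) v w))"

end

(*
  Root the tree at r and put k = ceil (sqrt d). Around each vertex v the neighbours get the
  directions parent_direction v + j * 2 pi / (4 k^2), j = 0, 1, ..., in rotation order starting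
  with the parent (at the root, with any neighbour); as deg v <= k^2 they span at most a quarter
  turn. The edge down to a child
  at depth n has length scale^n, with scale = sin (2 pi / (4 k^2)) / 4 so small that the subtree
  of a vertex x stays in the disc of radius 2 scale^(depth x + 1) around x. At every vertex the
  discs of the children and the edges to the other neighbours are then pairwise disjoint, which
  makes the drawing planar.

  The edge from a to its parent gets elevation pi / (4 k) * level a, where the level of a is the
  level of its parent plus the index of a at the parent, mod k; thus at v the edge to the
  neighbour of index j has level (level v + j) mod k. Two edges at v with different levels differ
  in elevation by at least pi / (4 k). Edges with equal levels have indices differing by a
  nonzero multiple of k, so their horizontal directions differ by at least pi / (2 k), and being
  elevated by at most pi / 4 they still meet at an angle of at least pi / (4 k) >= pi / (8 sqrt d).
*)

theory Submission
  imports Defs "HOL-Combinatorics.Orbits"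
begin

section \<open>Cyclic orders and angles\<close>

lemma cyclic_enumeration:
  assumes bij: "bij_betw f A A" and "a \<in> A" and reach: "\<forall>u\<in>A. \<exists>j. (f ^^ j) a = u"
  shows "bij_betw (\<lambda>j. (f ^^ j) a) {..<card A} A" and "(f ^^ card A) a = a"
proof -
  obtain w where "w \<in> A" "f w = a"
    using bij \<open>a \<in> A\<close> by (metis bij_betw_iff_bijections)
  moreover obtain i where "(f ^^ i) a = w" using reach \<open>w \<in> A\<close> by blast
  ultimately have "(f ^^ Suc i) a = a" by simp
  then have a_orbit: "a \<in> orbit f a"
    unfolding orbit_altdef by (metis (mono_tags) zero_less_Suc mem_Collect_eq)
  have orbit_eq: "orbit f a = A"
  proof
    show "orbit f a \<subseteq> A"
    proof
      fix u assume "u \<in> orbit f a"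
      then show "u \<in> A"
        by induction (use \<open>a \<in> A\<close> bij in \<open>auto simp: bij_betw_def\<close>)
    qed
    show "A \<subseteq> orbit f a"
    proof
      fix u assume "u \<in> A"
      then obtain j where "(f ^^ j) a = u" using reach by blast
      then show "u \<in> orbit f a" using funpow_in_orbit[OF a_orbit] by blast
    qed
  qed
  define n where "n = funpow_dist1 f a a"
  have "bij_betw (\<lambda>j. (f ^^ j) a) {..<n} A"
    using inj_on_funpow_dist1[OF a_orbit] orbit_conv_funpow_dist1[OF a_orbit]
    unfolding bij_betw_def orbit_eq n_def by (simp add: atLeast0LessThan)
  moreover from this have "card A = n" using bij_betw_same_card by fastforce
  ultimately show "bij_betw (\<lambda>j. (f ^^ j) a) {..<card A} A" "(f ^^ card A) a = a"
    using funpow_dist1_prop[OF a_orbit] by (simp_all add: n_def)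
qed

text \<open>\<open>(x + N - s) mod N\<close> is the counterclockwise offset from slot \<open>s\<close> to slot \<open>x\<close> among \<open>N\<close> slots.\<close>
lemma cyclic_successor_offset_le:
  fixes s x n N :: nat
  assumes "s < n" "x < n" "x \<noteq> s" "n \<le> N"
  shows "(Suc s mod n + N - s) mod N \<le> (x + N - s) mod N"
proof (cases "Suc s < n")
  case True
  have "(x + N - s) mod N \<noteq> 0"
    using assms by (cases "s < x") (auto simp: mod_if)
  then show ?thesis using True assms by (simp add: mod_if)
next
  case False
  then have "Suc s = n" "x < s" using assms by auto
  then show ?thesis using assms by (auto simp: mod_if)
qed

lemma mod_eq_imp_dist_ge:
  fixes a i j k :: nat
  assumes "(a + i) mod k = (a + j) mod k" "i \<noteq> j"
  shows "real k \<le> \<bar>real i - real j\<bar>"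
proof -
  have "int k dvd int i - int j"
    using assms(1) by (metis mod_eq_dvd_iff of_nat_add of_nat_mod add_diff_cancel_left)
  then have "\<bar>int k\<bar> \<le> \<bar>int i - int j\<bar>" using assms(2) by (intro dvd_imp_le_int) auto
  then show ?thesis by linarith
qed

lemma sin_le_norm_sub_cis:
  fixes l t \<delta> a b :: real
  assumes "0 \<le> l" "0 \<le> \<delta>" "\<delta> \<le> \<bar>a - b\<bar>" "\<bar>a - b\<bar> \<le> pi / 2"
  shows "l * sin \<delta> \<le> cmod (of_real l * cis a - of_real t * cis b)"
proof -
  have "sin \<delta> \<le> sin \<bar>a - b\<bar>"
    using assms by (intro sin_monotone_2pi_le) auto
  also have "sin \<bar>a - b\<bar> = \<bar>sin (a - b)\<bar>"
  proof (cases "0 \<le> a - b")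
    case True
    then show ?thesis using assms(4) sin_ge_zero[of "a - b"] by simp
  next
    case False
    have "sin (b - a) = - sin (a - b)" by (metis minus_diff_eq sin_minus)
    then show ?thesis using False assms(4) sin_ge_zero[of "b - a"] by simp
  qed
  finally have "l * sin \<delta> \<le> \<bar>Im (of_real l * cis (a - b) - of_real t)\<bar>"
    using assms(1) by (simp add: abs_mult mult_left_mono)
  also have "\<dots> \<le> cmod (of_real l * cis (a - b) - of_real t)"
    by (rule abs_Im_le_cmod)
  also have "\<dots> = cmod ((of_real l * cis (a - b) - of_real t) * cis b)"
    by (simp add: norm_mult)
  also have "(of_real l * cis (a - b) - of_real t) * cis b = of_real l * cis a - of_real t * cis b"
    by (simp add: algebra_simps cis_mult)
  finally show ?thesis .
qed

lemma vec_angle_ge: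
  fixes x y :: "real^3"
  assumes "norm x = 1" "norm y = 1" "0 \<le> \<delta>" "\<delta> \<le> pi" "x \<bullet> y \<le> cos \<delta>"
  shows "\<delta> \<le> vec_angle x y"
proof -
  have "-1 \<le> x \<bullet> y" using Cauchy_Schwarz_ineq2[of x y] assms(1,2) by simp
  then have "arccos (cos \<delta>) \<le> arccos (x \<bullet> y)" using assms(5) by (intro arccos_le_arccos) auto
  then show ?thesis using arccos_cos[OF assms(3,4)] assms(1,2) unfolding vec_angle_def by simp
qed

definition tangent :: "real \<Rightarrow> real \<Rightarrow> real^3" where
  "tangent \<alpha> \<theta> = vector [cos \<alpha> * cos \<theta>, cos \<alpha> * sin \<theta>, sin \<alpha>]"

lemma inner_tangent:
  "tangent a1 t1 \<bullet> tangent a2 t2 = cos a1 * cos a2 * cos (t1 - t2) + sin a1 * sin a2"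
  unfolding tangent_def inner_vec_def sum_3 by (simp add: cos_diff algebra_simps)

lemma norm_tangent: "norm (tangent a t) = 1"
  unfolding norm_eq_sqrt_inner inner_tangent by (simp flip: power2_eq_square)

lemma tangent_angle_ge_elevation_gap:
  assumes "0 \<le> a1" "a1 \<le> pi / 2" "0 \<le> a2" "a2 \<le> pi / 2" "0 \<le> \<delta>" "\<delta> \<le> \<bar>a1 - a2\<bar>"
  shows "\<delta> \<le> vec_angle (tangent a1 t1) (tangent a2 t2)"
proof (rule vec_angle_ge[OF norm_tangent norm_tangent \<open>0 \<le> \<delta>\<close>])
  show "\<delta> \<le> pi" using assms pi_gt_zero by linarith
  have "0 \<le> cos a1 * cos a2" using assms by (simp add: cos_ge_zero)
  then have "tangent a1 t1 \<bullet> tangent a2 t2 \<le> cos a1 * cos a2 + sin a1 * sin a2"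
    unfolding inner_tangent by (simp add: mult_left_le)
  also have "\<dots> = cos \<bar>a1 - a2\<bar>" by (simp add: cos_diff)
  also have "\<dots> \<le> cos \<delta>" using assms pi_gt_zero by (intro cos_monotone_0_pi_le) linarith+
  finally show "tangent a1 t1 \<bullet> tangent a2 t2 \<le> cos \<delta>" .
qed

lemma tangent_angle_ge_direction_gap:
  assumes "0 \<le> a" "a \<le> pi / 4" "0 \<le> \<delta>" "2 * \<delta> \<le> \<bar>t1 - t2\<bar>" "\<bar>t1 - t2\<bar> \<le> pi / 2"
  shows "\<delta> \<le> vec_angle (tangent a t1) (tangent a t2)"
proof (rule vec_angle_ge[OF norm_tangent norm_tangent \<open>0 \<le> \<delta>\<close>])
  let ?h = "\<bar>t1 - t2\<bar> / 2"
  show "\<delta> \<le> pi" using assms pi_gt_zero by linarith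
  have "cos (pi / 4) \<le> cos a" using assms by (intro cos_monotone_0_pi_le) auto
  then have "(sqrt 2 / 2)\<^sup>2 \<le> (cos a)\<^sup>2" unfolding cos_45 by (intro power_mono) auto
  then have half_le: "1 / 2 \<le> (cos a)\<^sup>2" by (simp add: power_divide)
  have "tangent a t1 \<bullet> tangent a t2 = 1 - (cos a)\<^sup>2 * (1 - cos (t1 - t2))"
    unfolding inner_tangent using sin_cos_squared_add[of a] by (simp add: power2_eq_square algebra_simps)
  also have "\<dots> \<le> 1 - (1 - cos (t1 - t2)) / 2"
    using mult_right_mono[OF half_le, of "1 - cos (t1 - t2)"] by simp
  also have "cos (t1 - t2) = 2 * (cos ?h)\<^sup>2 - 1"
    using cos_double_cos[of ?h] by simp
  also have "1 - (1 - (2 * (cos ?h)\<^sup>2 - 1)) / 2 = (cos ?h)\<^sup>2" by (simp add: field_simps)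
  also have "\<dots> \<le> cos ?h"
    using assms pi_gt_zero cos_ge_zero[of ?h] by (simp add: power2_eq_square mult_left_le)
  also have "\<dots> \<le> cos \<delta>" using assms pi_gt_zero by (intro cos_monotone_0_pi_le) simp_all
  finally show "tangent a t1 \<bullet> tangent a t2 \<le> cos \<delta>" .
qed

section \<open>Rooted ordered trees\<close>

locale rooted_tree =
  fixes V :: "'a set" and E :: "'a set set" and r :: 'a
  assumes tree: "is_tree V E" and root_in_V: "r \<in> V"
begin

definition adjacent :: "('a \<times> 'a) set" where
  "adjacent = {(x, y). {x, y} \<in> E}"

definition depth :: "'a \<Rightarrow> nat" where
  "depth v = (LEAST n. (r, v) \<in> adjacent ^^ n)"

definition parent :: "'a \<Rightarrow> 'a" where
  "parent v = (SOME u. (r, u) \<in> adjacent ^^ (depth v - 1) \<and> {u, v} \<in> E)"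

definition children :: "'a \<Rightarrow> 'a set" where
  "children v = {c \<in> V - {r}. parent c = v}"

lemma finite_V: "finite V"
  and edge_shape: "\<forall>e\<in>E. \<exists>a b. e = {a, b} \<and> a \<noteq> b \<and> a \<in> V \<and> b \<in> V"
  and connected: "\<forall>u\<in>V. \<forall>v\<in>V. (u, v) \<in> adjacent\<^sup>*"
  and card_E: "card E = card V - 1"
  using tree unfolding is_tree_def adjacent_def by simp_all

lemma edge_ends:
  assumes "{u, v} \<in> E" shows "u \<in> V" "v \<in> V" "u \<noteq> v"
proof -
  obtain a b where "{u, v} = {a, b}" "a \<noteq> b" "a \<in> V" "b \<in> V"
    using edge_shape assms by blast
  then show "u \<in> V" "v \<in> V" "u \<noteq> v" by (auto simp: doubleton_eq_iff)
qed

lemma finite_E: "finite E"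
proof (rule finite_subset[OF _ finite_Pow_iff[THEN iffD2, OF finite_V]])
  show "E \<subseteq> Pow V"
  proof
    fix e assume "e \<in> E"
    then obtain a b where "e = {a, b}" "a \<in> V" "b \<in> V" using edge_shape by blast
    then show "e \<in> Pow V" by simp
  qed
qed

lemma depth_path:
  assumes "v \<in> V" shows "(r, v) \<in> adjacent ^^ depth v"
proof -
  have "(r, v) \<in> adjacent\<^sup>*" using connected root_in_V assms by blast
  then show ?thesis unfolding depth_def by (rule LeastI_ex[OF rtrancl_imp_relpow])
qed

lemma depth_root: "depth r = 0"
  unfolding depth_def by (rule Least_eq_0) simp

lemma depth_eq_0_iff:
  assumes "v \<in> V" shows "depth v = 0 \<longleftrightarrow> v = r"
proof
  assume "depth v = 0"
  then show "v = r" using depth_path[OF assms] by simp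
qed (simp add: depth_root)

lemma
  assumes "v \<in> V" "v \<noteq> r"
  shows parent_in_V: "parent v \<in> V"
    and parent_edge: "{parent v, v} \<in> E"
    and depth_parent: "depth v = Suc (depth (parent v))"
proof -
  obtain m where m: "depth v = Suc m"
    using depth_eq_0_iff[OF assms(1)] assms(2) not0_implies_Suc by blast
  then obtain u where "(r, u) \<in> adjacent ^^ m" "(u, v) \<in> adjacent"
    using depth_path[OF assms(1)] by auto
  then have "\<exists>u. (r, u) \<in> adjacent ^^ (depth v - 1) \<and> {u, v} \<in> E"
    using m unfolding adjacent_def by auto
  then have "(r, parent v) \<in> adjacent ^^ (depth v - 1) \<and> {parent v, v} \<in> E"
    unfolding parent_def by (rule someI_ex)
  then have path: "(r, parent v) \<in> adjacent ^^ m" and edge: "{parent v, v} \<in> E"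
    using m by simp_all
  show "{parent v, v} \<in> E" by (rule edge)
  then show parent_V: "parent v \<in> V" by (rule edge_ends)
  have "depth (parent v) \<le> m"
    using path unfolding depth_def by (rule Least_le)
  moreover have "(parent v, v) \<in> adjacent"
    using edge unfolding adjacent_def by (simp add: insert_commute)
  then have "(r, v) \<in> adjacent ^^ Suc (depth (parent v))"
    using depth_path[OF parent_V] by auto
  then have "depth v \<le> Suc (depth (parent v))"
    unfolding depth_def by (rule Least_le)
  ultimately show "depth v = Suc (depth (parent v))" using m by simp
qed

lemma children_iff: "c \<in> children v \<longleftrightarrow> c \<in> V \<and> c \<noteq> r \<and> parent c = v"
  unfolding children_def by blast

lemma childD:
  assumes "c \<in> children v"
  shows "c \<in> V" "c \<noteq> r" "parent c = v" "v \<in> V" "depth c = Suc (depth v)"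
  using assms parent_in_V[of c] depth_parent[of c] unfolding children_iff by auto

lemma parent_notin_children:
  assumes "v \<in> V" "v \<noteq> r" shows "parent v \<notin> children v"
  using depth_parent[OF assms] childD(5) by fastforce

lemma parent_edge_eq_iff:
  assumes "a \<in> V" "a \<noteq> r" "b \<in> V" "b \<noteq> r"
  shows "{parent a, a} = {parent b, b} \<longleftrightarrow> a = b"
  using depth_parent[OF assms(1,2)] depth_parent[OF assms(3,4)] by (auto simp: doubleton_eq_iff)

lemma edges_eq: "E = (\<lambda>a. {parent a, a}) ` (V - {r})"
proof -
  have sub: "(\<lambda>a. {parent a, a}) ` (V - {r}) \<subseteq> E"
    using parent_edge by blast
  have "inj_on (\<lambda>a. {parent a, a}) (V - {r})"
    using parent_edge_eq_iff by (auto simp: inj_on_def)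
  then have "card ((\<lambda>a. {parent a, a}) ` (V - {r})) = card E"
    using card_E root_in_V finite_V by (simp add: card_image)
  then show ?thesis using card_subset_eq[OF finite_E sub] by simp
qed

lemma edge_as_parent_edge:
  assumes "e \<in> E"
  obtains a where "a \<in> V" "a \<noteq> r" "e = {parent a, a}"
proof -
  (* edges_eq is no rewrite rule: its right-hand side mentions E through parent *)
  have "e \<in> (\<lambda>a. {parent a, a}) ` (V - {r})" using assms by (subst (asm) edges_eq)
  then show thesis using that by blast
qed

lemma nbrs_iff:
  assumes "v \<in> V"
  shows "u \<in> nbrs E v \<longleftrightarrow> (v \<noteq> r \<and> u = parent v) \<or> u \<in> children v"
proof -
  have "u \<in> nbrs E v \<longleftrightarrow> (\<exists>a\<in>V - {r}. {v, u} = {parent a, a})"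
    unfolding nbrs_def by (subst edges_eq) blast
  also have "\<dots> \<longleftrightarrow> (v \<noteq> r \<and> u = parent v) \<or> u \<in> children v"
    using assms unfolding children_iff by (auto simp: doubleton_eq_iff)
  finally show ?thesis .
qed

lemma children_in_nbrs: "c \<in> children v \<Longrightarrow> c \<in> nbrs E v"
  using nbrs_iff childD(4) by blast

lemma parent_in_nbrs: "v \<in> V \<Longrightarrow> v \<noteq> r \<Longrightarrow> parent v \<in> nbrs E v"
  using nbrs_iff by blast

inductive ancestor :: "'a \<Rightarrow> 'a \<Rightarrow> bool" where
  refl: "x \<in> V \<Longrightarrow> ancestor x x"
| step: "ancestor x (parent y) \<Longrightarrow> y \<in> V \<Longrightarrow> y \<noteq> r \<Longrightarrow> ancestor x y"

lemma ancestor_in_V: "ancestor x y \<Longrightarrow> x \<in> V \<and> y \<in> V"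
  by (induction rule: ancestor.induct) auto

lemma proper_ancestor_parent:
  assumes "ancestor x y" "x \<noteq> y" shows "y \<in> V" "y \<noteq> r" "ancestor x (parent y)"
  using assms by (auto elim: ancestor.cases)

lemma ancestor_child:
  "ancestor x y \<Longrightarrow> x \<noteq> y \<Longrightarrow> \<exists>c\<in>children x. ancestor c y"
proof (induction rule: ancestor.induct)
  case (step x y)
  show ?case
  proof (cases "x = parent y")
    case True
    then show ?thesis using step.hyps by (auto simp: children_iff intro: ancestor.refl)
  next
    case False
    then obtain c where "c \<in> children x" "ancestor c (parent y)" using step.IH by blast
    then show ?thesis using step.hyps(2,3) ancestor.step by blast
  qed
qed simp

lemma root_ancestor:
  assumes "y \<in> V" shows "ancestor r y"
  using assms
proof (induction "depth y" arbitrary: y)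
  case 0
  then show ?case using depth_eq_0_iff ancestor.refl by simp
next
  case (Suc n)
  then have "y \<noteq> r" using depth_root by auto
  then have "ancestor r (parent y)" using Suc parent_in_V[of y] depth_parent[of y] by simp
  then show ?case using Suc.prems \<open>y \<noteq> r\<close> by (rule ancestor.step)
qed

lemma vertex_pair_cases:
  assumes "x \<in> V" "y \<in> V"
  obtains "ancestor x y" | "ancestor y x"
  | g c d where "c \<in> children g" "d \<in> children g" "c \<noteq> d" "ancestor c x" "ancestor d y"
proof -
  define C where "C = {g. ancestor g x \<and> ancestor g y}"
  have "C \<subseteq> V" unfolding C_def using ancestor_in_V by blast
  then have "finite C" using finite_V finite_subset by blast
  moreover have "r \<in> C" unfolding C_def using assms root_ancestor by blast
  ultimately have "Max (depth ` C) \<in> depth ` C" by (intro Max_in) auto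
  then obtain g where g: "g \<in> C" and g_Max: "depth g = Max (depth ` C)" by (metis imageE)
  have g_max: "depth g' \<le> depth g" if "g' \<in> C" for g'
    unfolding g_Max using \<open>finite C\<close> that by (simp add: Max_ge)
  consider "ancestor x y" | "ancestor y x" | "\<not> ancestor x y" "\<not> ancestor y x" by blast
  then show thesis
  proof cases
    case 3
    then have "g \<noteq> x" "g \<noteq> y" using g unfolding C_def by auto
    then obtain c d where c: "c \<in> children g" "ancestor c x" and d: "d \<in> children g" "ancestor d y"
      using ancestor_child g unfolding C_def by blast
    have "c \<noteq> d"
    proof
      assume "c = d"
      then have "c \<in> C" using c d unfolding C_def by blast
      then show False using g_max childD(5)[OF c(1)] by fastforce
    qed
    then show thesis using that(3) c d by blast
  qed (use that in blast)+
qed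

end

locale ordered_rooted_tree = rooted_tree V E r
  for V :: "'a set" and E :: "'a set set" and r :: 'a +
  fixes \<sigma> :: "'a \<Rightarrow> 'a \<Rightarrow> 'a"
  assumes rotation: "is_rotation_system V E \<sigma>"
begin

definition first_nbr :: "'a \<Rightarrow> 'a" where
  "first_nbr v = (if v = r then (SOME u. u \<in> nbrs E v) else parent v)"

definition deg :: "'a \<Rightarrow> nat" where
  "deg v = card (nbrs E v)"

definition nbr_index :: "'a \<Rightarrow> 'a \<Rightarrow> nat" where
  "nbr_index v = the_inv_into {..<deg v} (\<lambda>j. (\<sigma> v ^^ j) (first_nbr v))"

lemma first_nbr_in_nbrs:
  assumes "v \<in> V" "nbrs E v \<noteq> {}" shows "first_nbr v \<in> nbrs E v"
  using assms nbrs_iff[OF assms(1)] some_in_eq unfolding first_nbr_def by auto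

lemma nbr_enumeration:
  assumes "v \<in> V" "nbrs E v \<noteq> {}"
  shows "bij_betw (\<lambda>j. (\<sigma> v ^^ j) (first_nbr v)) {..<deg v} (nbrs E v)"
    and "(\<sigma> v ^^ deg v) (first_nbr v) = first_nbr v"
proof -
  have "bij_betw (\<sigma> v) (nbrs E v) (nbrs E v)"
    and "\<forall>u\<in>nbrs E v. \<exists>j. (\<sigma> v ^^ j) (first_nbr v) = u"
    using rotation assms first_nbr_in_nbrs[OF assms] unfolding is_rotation_system_def by blast+
  from cyclic_enumeration[OF this(1) first_nbr_in_nbrs[OF assms] this(2)]
  show "bij_betw (\<lambda>j. (\<sigma> v ^^ j) (first_nbr v)) {..<deg v} (nbrs E v)"
    and "(\<sigma> v ^^ deg v) (first_nbr v) = first_nbr v"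
    unfolding deg_def by blast+
qed

lemma nbr_index:
  assumes "v \<in> V" "u \<in> nbrs E v"
  shows "nbr_index v u < deg v" "(\<sigma> v ^^ nbr_index v u) (first_nbr v) = u"
proof -
  have "nbrs E v \<noteq> {}" using assms(2) by blast
  note bij = nbr_enumeration(1)[OF assms(1) this]
  show "nbr_index v u < deg v"
    using bij_betwE[OF bij_betw_the_inv_into[OF bij]] assms unfolding nbr_index_def by blast
  show "(\<sigma> v ^^ nbr_index v u) (first_nbr v) = u"
    unfolding nbr_index_def using f_the_inv_into_f_bij_betw[OF bij] assms by blast
qed

lemma nbr_index_eq_iff:
  assumes "v \<in> V" "u \<in> nbrs E v" "w \<in> nbrs E v"
  shows "nbr_index v u = nbr_index v w \<longleftrightarrow> u = w"
  using nbr_index(2)[OF assms(1,2)] nbr_index(2)[OF assms(1,3)] by metis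

lemma nbr_index_of_enumeration:
  assumes "v \<in> V" "nbrs E v \<noteq> {}" "j < deg v"
  shows "nbr_index v ((\<sigma> v ^^ j) (first_nbr v)) = j"
  unfolding nbr_index_def
  using the_inv_into_f_f[OF bij_betw_imp_inj_on[OF nbr_enumeration(1)[OF assms(1,2)]]] assms(3)
  by simp

lemma nbr_index_parent:
  assumes "v \<in> V" "v \<noteq> r" shows "nbr_index v (parent v) = 0"
proof -
  have "parent v \<in> nbrs E v" using nbrs_iff[OF assms(1)] assms(2) by simp
  then show ?thesis
    using nbr_index_of_enumeration[OF assms(1), of 0] nbr_index(1)[OF assms(1)]
    unfolding first_nbr_def using assms(2) by fastforce
qed

lemma rotation_in_nbrs:
  assumes "v \<in> V" "u \<in> nbrs E v" shows "\<sigma> v u \<in> nbrs E v"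
  using rotation assms unfolding is_rotation_system_def bij_betw_def by blast

lemma nbr_index_rotation:
  assumes "v \<in> V" "u \<in> nbrs E v"
  shows "nbr_index v (\<sigma> v u) = Suc (nbr_index v u) mod deg v"
proof -
  have ne: "nbrs E v \<noteq> {}" using assms(2) by blast
  have "\<sigma> v u = (\<sigma> v ^^ Suc (nbr_index v u)) (first_nbr v)"
    using nbr_index(2)[OF assms] by simp
  also have "\<dots> = (\<sigma> v ^^ (Suc (nbr_index v u) mod deg v)) (first_nbr v)"
    using funpow_mod_eq[OF nbr_enumeration(2)[OF assms(1) ne]] by simp
  finally show ?thesis
    using nbr_index_of_enumeration[OF assms(1) ne] nbr_index(1)[OF assms] by simp
qed

end

section \<open>The straight-line layout\<close>

locale tree_layout = ordered_rooted_tree V E r \<sigma>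
  for V :: "'a set" and E :: "'a set set" and r :: 'a and \<sigma> :: "'a \<Rightarrow> 'a \<Rightarrow> 'a" +
  fixes k :: nat
  assumes k_pos: "0 < k" and card_nbrs_le: "\<And>v. v \<in> V \<Longrightarrow> card (nbrs E v) \<le> k\<^sup>2"
begin

definition slots :: nat where
  "slots = 4 * k\<^sup>2"

definition slot_angle :: real where
  "slot_angle = 2 * pi / slots"

definition scale :: real where
  "scale = sin slot_angle / 4"

text \<open>Recursion along the path to the root; only the values at \<open>n = depth v\<close> are used.\<close>
fun parent_direction_at :: "nat \<Rightarrow> 'a \<Rightarrow> real" where
  "parent_direction_at 0 v = 0"
| "parent_direction_at (Suc n) v =
     parent_direction_at n (parent v) + slot_angle * nbr_index (parent v) v + pi"

fun position_at :: "nat \<Rightarrow> 'a \<Rightarrow> complex" where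
  "position_at 0 v = 0"
| "position_at (Suc n) v = position_at n (parent v) + of_real (scale ^ Suc n) *
     cis (parent_direction_at n (parent v) + slot_angle * nbr_index (parent v) v)"

fun level_at :: "nat \<Rightarrow> 'a \<Rightarrow> nat" where
  "level_at 0 v = 0"
| "level_at (Suc n) v = (level_at n (parent v) + nbr_index (parent v) v) mod k"

definition parent_direction :: "'a \<Rightarrow> real" where
  "parent_direction v = parent_direction_at (depth v) v"

definition pos :: "'a \<Rightarrow> complex" where
  "pos v = position_at (depth v) v"

definition level :: "'a \<Rightarrow> nat" where
  "level v = level_at (depth v) v"

definition direction :: "'a \<Rightarrow> 'a \<Rightarrow> real" where
  "direction v u = parent_direction v + slot_angle * nbr_index v u"

definition edge_length :: "'a \<Rightarrow> 'a \<Rightarrow> real" where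
  "edge_length v u = scale ^ max (depth v) (depth u)"

lemma deg_le: "v \<in> V \<Longrightarrow> deg v \<le> k\<^sup>2"
  unfolding deg_def by (rule card_nbrs_le)

lemma slot_angle_pos: "0 < slot_angle"
  using k_pos unfolding slot_angle_def slots_def by simp

lemma slot_angle_mult_slots: "slot_angle * slots = 2 * pi"
  using k_pos unfolding slot_angle_def slots_def by simp

lemma slot_angle_mult_k2: "slot_angle * k\<^sup>2 = pi / 2"
  using k_pos unfolding slot_angle_def slots_def by (simp add: field_simps)

lemma scale_pos: "0 < scale" and scale_le: "scale \<le> 1 / 4"
proof -
  have "1 \<le> real (k\<^sup>2)" using k_pos by (simp add: Suc_le_eq)
  then have "slot_angle \<le> 2 * pi / 4"
    unfolding slot_angle_def slots_def using k_pos by (intro divide_left_mono) simp_all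
  then show "0 < scale"
    unfolding scale_def using slot_angle_pos by (simp add: sin_gt_zero)
  show "scale \<le> 1 / 4" unfolding scale_def by simp
qed

lemma two_scale_power_Suc_le: "2 * scale ^ Suc n \<le> scale ^ n"
proof -
  have "(2 * scale) * scale ^ n \<le> scale ^ n"
    using scale_pos scale_le by (intro mult_left_le_one_le) simp_all
  then show ?thesis by (simp add: mult.assoc)
qed

lemma norm_scale_power_cis: "cmod (of_real (scale ^ n) * cis \<theta>) = scale ^ n"
  using scale_pos by (simp add: norm_mult del: of_real_power)

lemma child_layout:
  assumes "c \<in> V" "c \<noteq> r"
  shows "pos c = pos (parent c) + of_real (scale ^ depth c) * cis (direction (parent c) c)"
    and "parent_direction c = direction (parent c) c + pi"
    and "level c = (level (parent c) + nbr_index (parent c) c) mod k"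
  unfolding pos_def parent_direction_def level_def direction_def depth_parent[OF assms] by simp_all

lemma level_less: "level v < k"
  using k_pos unfolding level_def by (cases "depth v") simp_all

lemma position_nbr:
  assumes "v \<in> V" "u \<in> nbrs E v"
  shows "pos u = pos v + of_real (edge_length v u) * cis (direction v u)"
proof (cases "u \<in> children v")
  case True
  then show ?thesis
    using child_layout(1)[of u] childD[OF True] unfolding edge_length_def by simp
next
  case False
  then have "v \<noteq> r" "u = parent v" using nbrs_iff[OF assms(1)] assms(2) by auto
  moreover have "cis (direction (parent v) v + pi) = - cis (direction (parent v) v)"
    by (simp add: cis_mult[symmetric])
  ultimately show ?thesis
    using child_layout(1,2)[OF assms(1)] depth_parent[OF assms(1)] nbr_index_parent[OF assms(1)]
    unfolding edge_length_def direction_def by simp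
qed

lemma edge_length_pos: "0 < edge_length v u"
  unfolding edge_length_def using scale_pos by simp

lemma direction_diff:
  "direction v u - direction v w = slot_angle * (real (nbr_index v u) - real (nbr_index v w))"
  unfolding direction_def by (simp add: algebra_simps)

lemma direction_gap:
  assumes "v \<in> V" "u \<in> nbrs E v" "w \<in> nbrs E v" "u \<noteq> w"
  shows "slot_angle \<le> \<bar>direction v u - direction v w\<bar>"
    and "\<bar>direction v u - direction v w\<bar> \<le> pi / 2"
proof -
  let ?d = "real (nbr_index v u) - real (nbr_index v w)"
  have "nbr_index v u \<noteq> nbr_index v w" using nbr_index_eq_iff[OF assms(1-3)] assms(4) by simp
  then have "1 \<le> \<bar>?d\<bar>" by linarith
  then show "slot_angle \<le> \<bar>direction v u - direction v w\<bar>"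
    unfolding direction_diff abs_mult using slot_angle_pos by simp
  have "nbr_index v u < k\<^sup>2" "nbr_index v w < k\<^sup>2"
    using nbr_index(1)[OF assms(1)] deg_le[OF assms(1)] assms(2,3) by (meson order_less_le_trans)+
  then have "\<bar>?d\<bar> \<le> k\<^sup>2" by linarith
  then have "slot_angle * \<bar>?d\<bar> \<le> slot_angle * k\<^sup>2"
    using slot_angle_pos by (intro mult_left_mono) simp_all
  then show "\<bar>direction v u - direction v w\<bar> \<le> pi / 2"
    unfolding direction_diff abs_mult slot_angle_mult_k2 using slot_angle_pos by simp
qed

lemma nbr_rays_apart:
  assumes "v \<in> V" "u \<in> nbrs E v" "w \<in> nbrs E v" "u \<noteq> w" "0 \<le> l"
  shows "4 * scale * l \<le> cmod (of_real l * cis (direction v u) - of_real t * cis (direction v w))"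
  using sin_le_norm_sub_cis[OF assms(5) less_imp_le[OF slot_angle_pos] direction_gap[OF assms(1-4)]]
  unfolding scale_def by (simp add: mult.commute)

definition subtree_disc :: "'a \<Rightarrow> complex set" where
  "subtree_disc x = ball (pos x) (2 * scale ^ Suc (depth x))"

lemma dist_parent: "y \<in> V \<Longrightarrow> y \<noteq> r \<Longrightarrow> dist (pos y) (pos (parent y)) = scale ^ depth y"
  using child_layout(1) norm_scale_power_cis by (simp add: dist_norm)

lemma ancestor_pos_dist:
  "ancestor x y \<Longrightarrow> dist (pos y) (pos x) \<le> 2 * scale ^ Suc (depth x) - 2 * scale ^ Suc (depth y)"
proof (induction rule: ancestor.induct)
  case (step x y)
  have "dist (pos y) (pos x) \<le> dist (pos y) (pos (parent y)) + dist (pos (parent y)) (pos x)"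
    by (rule dist_triangle)
  moreover have "dist (pos (parent y)) (pos x) \<le> 2 * scale ^ Suc (depth x) - 2 * scale ^ depth y"
    using step.IH depth_parent[OF step.hyps(2,3)] by simp
  ultimately show ?case
    using dist_parent[OF step.hyps(2,3)] two_scale_power_Suc_le[of "depth y"] by linarith
qed simp

lemma descendant_in_subtree_disc:
  assumes "ancestor x y" shows "pos y \<in> subtree_disc x"
proof -
  have "0 < scale ^ Suc (depth y)" using scale_pos by simp
  then show ?thesis
    using ancestor_pos_dist[OF assms] unfolding subtree_disc_def mem_ball dist_commute[of "pos x"]
    by linarith
qed

lemma edge_in_subtree_disc:
  assumes "ancestor x (parent a)" "a \<in> V" "a \<noteq> r"
  shows "closed_segment (pos (parent a)) (pos a) \<subseteq> subtree_disc x"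
  using assms ancestor.step descendant_in_subtree_disc
  unfolding subtree_disc_def by (intro closed_segment_subset) auto

lemma vertex_notin_child_disc:
  assumes "c \<in> children v" shows "pos v \<notin> subtree_disc c"
  using dist_parent[of c] childD[OF assms] two_scale_power_Suc_le[of "depth c"]
  unfolding subtree_disc_def by (simp add: dist_commute)

lemma segment_from_vertex:
  assumes "v \<in> V" "w \<in> nbrs E v" "z \<in> closed_segment (pos v) (pos w)"
  obtains t where "0 \<le> t" "z = pos v + of_real t * cis (direction v w)"
proof -
  obtain s where "0 \<le> s" "z = (1 - s) *\<^sub>R pos v + s *\<^sub>R pos w"
    using assms(3) unfolding closed_segment_def by blast
  then have "z = pos v + of_real (s * edge_length v w) * cis (direction v w)"
    using position_nbr[OF assms(1,2)] by (simp add: scaleR_conv_of_real algebra_simps)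
  moreover have "0 \<le> s * edge_length v w" using \<open>0 \<le> s\<close> edge_length_pos[of v w] by simp
  ultimately show thesis using that by blast
qed

lemma incident_segments_meet_at_vertex:
  assumes "v \<in> V" "u \<in> nbrs E v" "w \<in> nbrs E v" "u \<noteq> w"
  shows "closed_segment (pos v) (pos u) \<inter> closed_segment (pos v) (pos w) \<subseteq> {pos v}"
proof
  fix z assume z: "z \<in> closed_segment (pos v) (pos u) \<inter> closed_segment (pos v) (pos w)"
  obtain t where t: "0 \<le> t" "z = pos v + of_real t * cis (direction v u)"
    using segment_from_vertex[OF assms(1,2)] z by blast
  obtain t' where t': "z = pos v + of_real t' * cis (direction v w)"
    using segment_from_vertex[OF assms(1,3)] z by blast
  have "4 * scale * t \<le> cmod (of_real t * cis (direction v u) - of_real t' * cis (direction v w))"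
    by (rule nbr_rays_apart[OF assms t(1)])
  also have "\<dots> = 0" using t(2) t' by simp
  finally have "t = 0" using t(1) scale_pos by (simp add: mult_le_0_iff)
  then show "z \<in> {pos v}" using t(2) by simp
qed

lemma child_disc_disjoint_segment:
  assumes "c \<in> children v" "w \<in> nbrs E v" "w \<noteq> c"
  shows "subtree_disc c \<inter> closed_segment (pos v) (pos w) = {}"
proof (rule ccontr)
  assume "subtree_disc c \<inter> closed_segment (pos v) (pos w) \<noteq> {}"
  then obtain z where z: "z \<in> subtree_disc c" "z \<in> closed_segment (pos v) (pos w)" by blast
  have v: "v \<in> V" and c: "c \<in> nbrs E v" using childD(4)[OF assms(1)] children_in_nbrs[OF assms(1)] .
  obtain t where t: "z = pos v + of_real t * cis (direction v w)"
    using segment_from_vertex[OF v assms(2) z(2)] by blast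
  have "4 * scale * scale ^ depth c
      \<le> cmod (of_real (scale ^ depth c) * cis (direction v c) - of_real t * cis (direction v w))"
    using scale_pos by (intro nbr_rays_apart[OF v c assms(2)]) (use assms(3) in auto)
  also have "\<dots> = dist (pos c) z"
    using child_layout(1)[of c] childD[OF assms(1)] t by (simp add: dist_norm)
  also have "\<dots> < 2 * scale ^ Suc (depth c)"
    using z(1) unfolding subtree_disc_def by (simp add: dist_commute)
  finally show False using scale_pos by simp
qed

lemma child_discs_disjoint:
  assumes "c \<in> children v" "d \<in> children v" "c \<noteq> d"
  shows "subtree_disc c \<inter> subtree_disc d = {}"
proof -
  have v: "v \<in> V" and nbrs: "c \<in> nbrs E v" "d \<in> nbrs E v"
    using childD(4)[OF assms(1)] children_in_nbrs[OF assms(1)] children_in_nbrs[OF assms(2)] .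
  have "4 * scale * scale ^ depth c
      \<le> cmod (of_real (scale ^ depth c) * cis (direction v c) - of_real (scale ^ depth d) * cis (direction v d))"
    using scale_pos by (intro nbr_rays_apart[OF v nbrs assms(3)]) simp
  also have "\<dots> = dist (pos c) (pos d)"
    using child_layout(1)[of c] child_layout(1)[of d] childD[OF assms(1)] childD[OF assms(2)]
    by (simp add: dist_norm)
  finally show ?thesis
    unfolding subtree_disc_def using childD(5)[OF assms(1)] childD(5)[OF assms(2)]
    by (intro disjoint_ballI) simp
qed

text \<open>The part of the drawing beyond \<open>v\<close> in the direction of its neighbour \<open>u\<close>.\<close>
definition branch :: "'a \<Rightarrow> 'a \<Rightarrow> complex set" where
  "branch v u = open_segment (pos v) (pos u) \<union> (if u \<in> children v then subtree_disc u else {})"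

lemma vertex_notin_branch: "pos v \<notin> branch v u"
  using vertex_notin_child_disc unfolding branch_def open_segment_def by auto

lemma branches_disjoint:
  assumes "v \<in> V" "u \<in> nbrs E v" "w \<in> nbrs E v" "u \<noteq> w"
  shows "branch v u \<inter> branch v w = {}"
proof -
  have "open_segment (pos v) (pos u) \<inter> open_segment (pos v) (pos w) = {}"
    using incident_segments_meet_at_vertex[OF assms] unfolding open_segment_def by blast
  moreover have "subtree_disc u \<inter> open_segment (pos v) (pos w) = {}" if "u \<in> children v"
    using child_disc_disjoint_segment[OF that assms(3)] assms(4) segment_open_subset_closed by blast
  moreover have "subtree_disc w \<inter> open_segment (pos v) (pos u) = {}" if "w \<in> children v"
    using child_disc_disjoint_segment[OF that assms(2)] assms(4) segment_open_subset_closed by blast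
  moreover have "subtree_disc u \<inter> subtree_disc w = {}" if "u \<in> children v" "w \<in> children v"
    using child_discs_disjoint[OF that assms(4)] .
  ultimately show ?thesis unfolding branch_def by auto
qed

lemma descendant_in_branch:
  assumes "c \<in> children g" "ancestor c y"
  shows "pos y \<in> branch g c" and "open_segment (pos (parent y)) (pos y) \<subseteq> branch g c"
proof -
  show "pos y \<in> branch g c"
    using descendant_in_subtree_disc[OF assms(2)] assms(1) unfolding branch_def by simp
  show "open_segment (pos (parent y)) (pos y) \<subseteq> branch g c"
  proof (cases "c = y")
    case True
    then show ?thesis using childD(3)[OF assms(1)] unfolding branch_def by auto
  next
    case False
    note y = proper_ancestor_parent[OF assms(2) False]
    show ?thesis
      using edge_in_subtree_disc[OF y(3) y(1,2)] assms(1) segment_open_subset_closed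
      unfolding branch_def by auto
  qed
qed

lemma proper_descendant_in_branch:
  assumes "ancestor x y" "x \<noteq> y"
  obtains c where "c \<in> children x" "pos y \<in> branch x c"
    "open_segment (pos (parent y)) (pos y) \<subseteq> branch x c"
  using ancestor_child[OF assms] descendant_in_branch by blast

lemma open_edge_in_parent_branch:
  assumes "a \<in> V" "a \<noteq> r"
  shows "open_segment (pos (parent a)) (pos a) \<subseteq> branch a (parent a)"
  unfolding branch_def using parent_notin_children[OF assms] by (simp add: open_segment_commute)

lemma sibling_branches_disjoint:
  assumes "c \<in> children g" "d \<in> children g" "c \<noteq> d"
  shows "branch g c \<inter> branch g d = {}"
  using branches_disjoint[OF childD(4)[OF assms(1)] children_in_nbrs[OF assms(1)]
      children_in_nbrs[OF assms(2)] assms(3)] .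

lemma child_branch_disjoint_parent_branch:
  assumes "a \<in> V" "a \<noteq> r" "c \<in> children a"
  shows "branch a c \<inter> branch a (parent a) = {}"
  using branches_disjoint[OF assms(1) children_in_nbrs[OF assms(3)] parent_in_nbrs[OF assms(1,2)]]
    parent_notin_children[OF assms(1,2)] assms(3) by blast

lemma inj_on_pos: "inj_on pos V"
proof (rule inj_onI, rule ccontr)
  fix x y assume x: "x \<in> V" and y: "y \<in> V" and eq: "pos x = pos y" and "x \<noteq> y"
  have not_below: "pos a \<noteq> pos b" if anc: "ancestor a b" "a \<noteq> b" for a b
  proof -
    obtain c where "pos b \<in> branch a c" using proper_descendant_in_branch[OF anc] by blast
    then show ?thesis using vertex_notin_branch[of a c] by auto
  qed
  from x y show False
  proof (cases rule: vertex_pair_cases)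
    case 1
    then show False using not_below eq \<open>x \<noteq> y\<close> by blast
  next
    case 2
    then show False using not_below[of y x] eq \<open>x \<noteq> y\<close> by simp
  next
    case (3 g c d)
    have "pos x \<in> branch g c" "pos y \<in> branch g d"
      using descendant_in_branch(1)[OF 3(1,4)] descendant_in_branch(1)[OF 3(2,5)] .
    moreover have "branch g c \<inter> branch g d = {}" using sibling_branches_disjoint 3 by blast
    ultimately show False using eq by (auto simp: disjoint_iff)
  qed
qed

lemma vertex_notin_open_edge:
  assumes "w \<in> V" "a \<in> V" "a \<noteq> r"
  shows "pos w \<notin> open_segment (pos (parent a)) (pos a)"
proof
  assume on_edge: "pos w \<in> open_segment (pos (parent a)) (pos a)"
  then have "a \<noteq> w" unfolding open_segment_def by auto
  from assms(2,1) show False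
  proof (cases rule: vertex_pair_cases)
    case 1
    obtain c where c: "c \<in> children a" "pos w \<in> branch a c"
      using proper_descendant_in_branch[OF 1 \<open>a \<noteq> w\<close>] by blast
    then show False
      using child_branch_disjoint_parent_branch[OF assms(2,3) c(1)] on_edge
        open_edge_in_parent_branch[OF assms(2,3)] by (auto simp: disjoint_iff)
  next
    case 2
    obtain c where "open_segment (pos (parent a)) (pos a) \<subseteq> branch w c"
      using proper_descendant_in_branch[OF 2] \<open>a \<noteq> w\<close> by blast
    then show False using vertex_notin_branch[of w c] on_edge by auto
  next
    case (3 g c d)
    have "open_segment (pos (parent a)) (pos a) \<subseteq> branch g c" "pos w \<in> branch g d"
      using descendant_in_branch(2)[OF 3(1,4)] descendant_in_branch(1)[OF 3(2,5)] .
    moreover have "branch g c \<inter> branch g d = {}" using sibling_branches_disjoint 3 by blast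
    ultimately show False using on_edge by (auto simp: disjoint_iff)
  qed
qed

lemma open_edges_disjoint:
  assumes "a \<in> V" "a \<noteq> r" "b \<in> V" "b \<noteq> r" "a \<noteq> b"
  shows "open_segment (pos (parent a)) (pos a) \<inter> open_segment (pos (parent b)) (pos b) = {}"
proof -
  have below: "open_segment (pos (parent x)) (pos x) \<inter> open_segment (pos (parent y)) (pos y) = {}"
    if anc: "ancestor x y" "x \<noteq> y" and x: "x \<in> V" "x \<noteq> r" for x y
  proof -
    obtain c where c: "c \<in> children x" "open_segment (pos (parent y)) (pos y) \<subseteq> branch x c"
      using proper_descendant_in_branch[OF anc] by blast
    then show ?thesis
      using child_branch_disjoint_parent_branch[OF x c(1)] open_edge_in_parent_branch[OF x] by auto
  qed
  from assms(1,3) show ?thesis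
  proof (cases rule: vertex_pair_cases)
    case 1
    then show ?thesis using below assms by blast
  next
    case 2
    then show ?thesis using below[of b a] assms by blast
  next
    case (3 g c d)
    have "open_segment (pos (parent a)) (pos a) \<subseteq> branch g c"
      "open_segment (pos (parent b)) (pos b) \<subseteq> branch g d"
      using descendant_in_branch(2)[OF 3(1,4)] descendant_in_branch(2)[OF 3(2,5)] .
    moreover have "branch g c \<inter> branch g d = {}" using sibling_branches_disjoint 3 by blast
    ultimately show ?thesis by auto
  qed
qed

lemma arg_nbr_quotient:
  assumes "v \<in> V" "u \<in> nbrs E v" "w \<in> nbrs E v"
  shows "Arg2pi ((pos w - pos v) / (pos u - pos v))
    = slot_angle * ((nbr_index v w + slots - nbr_index v u) mod slots)"
proof (rule Arg2pi_unique)
  let ?i = "nbr_index v u" and ?j = "nbr_index v w"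
  let ?m = "(?j + slots - ?i) mod slots"
  have "deg v \<le> slots" using deg_le[OF assms(1)] unfolding slots_def by simp
  then have "?i < slots" "?j < slots"
    using nbr_index(1)[OF assms(1)] assms(2,3) by (meson less_le_trans)+
  have "slot_angle * ?m = direction v w - direction v u
    \<or> slot_angle * ?m = direction v w - direction v u + 2 * pi"
  proof (cases "?i \<le> ?j")
    case True
    then have "?m = ?j - ?i" using \<open>?j < slots\<close> by (simp add: mod_if)
    then show ?thesis using True unfolding direction_diff by (simp add: of_nat_diff algebra_simps)
  next
    case False
    then have m: "real ?m = real slots + ?j - ?i" using \<open>?i < slots\<close> by (simp add: of_nat_diff)
    have "slot_angle * ?m = slot_angle * slots + slot_angle * (real ?j - real ?i)"
      unfolding m by (simp add: algebra_simps)
    also note slot_angle_mult_slots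
    finally show ?thesis unfolding direction_diff by (simp add: algebra_simps)
  qed
  then have "cis (direction v w - direction v u) = cis (slot_angle * ?m)"
    by (auto simp: cis_mult[symmetric])
  moreover have "(pos w - pos v) / (pos u - pos v)
      = of_real (edge_length v w / edge_length v u) * cis (direction v w - direction v u)"
    using position_nbr[OF assms(1,2)] position_nbr[OF assms(1,3)] edge_length_pos[of v u]
    by (simp add: cis_divide[symmetric])
  ultimately show "of_real (edge_length v w / edge_length v u) * exp (\<i> * of_real (slot_angle * ?m))
      = (pos w - pos v) / (pos u - pos v)"
    by (simp add: cis_conv_exp)
  show "0 < edge_length v w / edge_length v u" using edge_length_pos by simp
  show "0 \<le> slot_angle * ?m" using slot_angle_pos by simp
  have "?m < slots" using k_pos unfolding slots_def by simp
  then have "slot_angle * ?m < slot_angle * slots" using slot_angle_pos by simp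
  then show "slot_angle * ?m < 2 * pi" unfolding slot_angle_mult_slots .
qed

lemma rotation_order:
  assumes "v \<in> V" "u \<in> nbrs E v" "x \<in> nbrs E v" "x \<noteq> u"
  shows "Arg2pi ((pos (\<sigma> v u) - pos v) / (pos u - pos v)) \<le> Arg2pi ((pos x - pos v) / (pos u - pos v))"
proof -
  have "(Suc (nbr_index v u) mod deg v + slots - nbr_index v u) mod slots
      \<le> (nbr_index v x + slots - nbr_index v u) mod slots"
  proof (rule cyclic_successor_offset_le)
    show "nbr_index v u < deg v" "nbr_index v x < deg v" using nbr_index(1) assms by auto
    show "nbr_index v x \<noteq> nbr_index v u" using nbr_index_eq_iff assms by auto
    show "deg v \<le> slots" using deg_le[OF assms(1)] unfolding slots_def by simp
  qed
  then show ?thesis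
    unfolding arg_nbr_quotient[OF assms(1,2) rotation_in_nbrs[OF assms(1,2)]]
      arg_nbr_quotient[OF assms(1-3)] nbr_index_rotation[OF assms(1,2)]
    using slot_angle_pos by simp
qed

lemma vertex_on_edge:
  assumes "w \<in> V" "a \<in> V" "a \<noteq> r" "pos w \<in> closed_segment (pos (parent a)) (pos a)"
  shows "w = parent a \<or> w = a"
proof -
  have "pos w = pos (parent a) \<or> pos w = pos a"
    using assms(4) vertex_notin_open_edge[OF assms(1-3)] unfolding closed_segment_eq_open by blast
  then show ?thesis
    using inj_on_pos assms(1,2) parent_in_V[OF assms(2,3)] by (meson inj_onD)
qed

lemma edges_meet_at_common_ends:
  assumes "a \<in> V" "a \<noteq> r" "b \<in> V" "b \<noteq> r" "a \<noteq> b"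
  shows "closed_segment (pos (parent a)) (pos a) \<inter> closed_segment (pos (parent b)) (pos b)
    \<subseteq> pos ` ({parent a, a} \<inter> {parent b, b})"
proof
  fix z assume z: "z \<in> closed_segment (pos (parent a)) (pos a) \<inter> closed_segment (pos (parent b)) (pos b)"
  have end_of_both: "z \<in> pos ` ({parent a, a} \<inter> {parent b, b})"
    if "z = pos y" "y \<in> {parent a, a} \<union> {parent b, b}" for y
  proof -
    have "y \<in> V" using that(2) parent_in_V assms by auto
    then have "y \<in> {parent a, a} \<inter> {parent b, b}"
      using vertex_on_edge[OF _ assms(1,2)] vertex_on_edge[OF _ assms(3,4)] that z by blast
    then show ?thesis using that(1) by blast
  qed
  show "z \<in> pos ` ({parent a, a} \<inter> {parent b, b})"
  proof (cases "z \<in> open_segment (pos (parent a)) (pos a) \<and> z \<in> open_segment (pos (parent b)) (pos b)")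
    case True
    then show ?thesis using open_edges_disjoint[OF assms] by blast
  next
    case False
    then show ?thesis using z end_of_both unfolding closed_segment_eq_open by blast
  qed
qed

lemma hull_parent_edge:
  "convex hull (pos ` {parent a, a}) = closed_segment (pos (parent a)) (pos a)"
  by (simp add: segment_convex_hull)

lemma straight_line_drawing: "straight_line_drawing V E \<sigma> pos"
  unfolding straight_line_drawing_def
proof (intro conjI ballI impI)
  show "inj_on pos V" by (rule inj_on_pos)
next
  fix e w assume "e \<in> E" "w \<in> V" "w \<notin> e"
  obtain a where a: "a \<in> V" "a \<noteq> r" "e = {parent a, a}"
    using edge_as_parent_edge[OF \<open>e \<in> E\<close>] .
  have "pos w \<notin> closed_segment (pos (parent a)) (pos a)"
    using vertex_on_edge[OF \<open>w \<in> V\<close> a(1,2)] \<open>w \<notin> e\<close> a(3) by blast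
  then show "pos w \<notin> convex hull (pos ` e)" unfolding a(3) hull_parent_edge .
next
  fix e f assume "e \<in> E" "f \<in> E" "e \<noteq> f"
  obtain a where a: "a \<in> V" "a \<noteq> r" "e = {parent a, a}"
    using edge_as_parent_edge[OF \<open>e \<in> E\<close>] .
  obtain b where b: "b \<in> V" "b \<noteq> r" "f = {parent b, b}"
    using edge_as_parent_edge[OF \<open>f \<in> E\<close>] .
  have "a \<noteq> b" using \<open>e \<noteq> f\<close> a(3) b(3) by blast
  show "convex hull (pos ` e) \<inter> convex hull (pos ` f) \<subseteq> pos ` (e \<inter> f)"
    using edges_meet_at_common_ends[OF a(1,2) b(1,2) \<open>a \<noteq> b\<close>] unfolding a(3) b(3) hull_parent_edge .
next
  fix v u x assume "v \<in> V" "u \<in> nbrs E v" "x \<in> nbrs E v" "x \<noteq> u"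
  then show "Arg2pi ((pos (\<sigma> v u) - pos v) / (pos u - pos v)) \<le> Arg2pi ((pos x - pos v) / (pos u - pos v))"
    by (rule rotation_order)
qed

section \<open>Arc elevations and angular resolution\<close>

definition elevation :: "'a set \<Rightarrow> real" where
  "elevation e = pi / (4 * real k) * level (THE a. a \<in> V \<and> a \<noteq> r \<and> e = {parent a, a})"

lemma elevation_parent_edge:
  assumes "a \<in> V" "a \<noteq> r" shows "elevation {parent a, a} = pi / (4 * real k) * level a"
proof -
  have "(THE b. b \<in> V \<and> b \<noteq> r \<and> {parent a, a} = {parent b, b}) = a"
    using assms parent_edge_eq_iff by (intro the_equality) auto
  then show ?thesis unfolding elevation_def by simp
qed

lemma elevation_bounds: "0 \<le> elevation e" "elevation e \<le> pi / 4"
proof -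
  let ?l = "level (THE a. a \<in> V \<and> a \<noteq> r \<and> e = {parent a, a})"
  have "real ?l \<le> k" using level_less less_imp_le of_nat_le_iff by blast
  then have "pi / (4 * real k) * ?l \<le> pi / (4 * real k) * k" by (intro mult_left_mono) simp_all
  then show "elevation e \<le> pi / 4" unfolding elevation_def using k_pos by simp
  show "0 \<le> elevation e" unfolding elevation_def by simp
qed

lemma elevation_le_half_pi: "elevation e \<le> pi / 2"
  using elevation_bounds(2)[of e] pi_gt_zero by linarith

lemma elevation_nbr:
  assumes "v \<in> V" "u \<in> nbrs E v"
  shows "elevation {v, u} = pi / (4 * real k) * ((level v + nbr_index v u) mod k)"
proof (cases "u \<in> children v")
  case True
  have "elevation {v, u} = elevation {parent u, u}" using childD(3)[OF True] by simp
  also have "\<dots> = pi / (4 * real k) * level u" using elevation_parent_edge childD(1,2)[OF True] by simp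
  finally show ?thesis using child_layout(3) childD[OF True] by simp
next
  case False
  then have "v \<noteq> r" "u = parent v" using nbrs_iff[OF assms(1)] assms(2) by auto
  moreover have "{v, parent v} = {parent v, v}" by blast
  ultimately show ?thesis
    using elevation_parent_edge[OF assms(1)] nbr_index_parent[OF assms(1)] level_less[of v] by simp
qed

lemma arc_tangent_nbr:
  assumes "v \<in> V" "u \<in> nbrs E v"
  shows "arc_tangent pos \<alpha> v u = tangent \<alpha> (direction v u)"
proof -
  have "pos u - pos v = of_real (edge_length v u) * cis (direction v u)"
    using position_nbr[OF assms] by simp
  then have "(pos u - pos v) / of_real (cmod (pos u - pos v)) = cis (direction v u)"
    using edge_length_pos[of v u] by (simp add: norm_mult)
  then show ?thesis unfolding arc_tangent_def tangent_def Let_def by simp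
qed

lemma nbr_tangents_angle_ge:
  assumes "v \<in> V" "u \<in> nbrs E v" "w \<in> nbrs E v" "u \<noteq> w"
  shows "pi / (4 * real k)
    \<le> vec_angle (arc_tangent pos (elevation {v, u}) v u) (arc_tangent pos (elevation {v, w}) v w)"
proof (cases "(level v + nbr_index v u) mod k = (level v + nbr_index v w) mod k")
  case True
  have "nbr_index v u \<noteq> nbr_index v w" using nbr_index_eq_iff assms by simp
  with True have "real k \<le> \<bar>real (nbr_index v u) - real (nbr_index v w)\<bar>"
    by (rule mod_eq_imp_dist_ge)
  then have "slot_angle * k \<le> \<bar>direction v u - direction v w\<bar>"
    unfolding direction_diff abs_mult using slot_angle_pos by simp
  moreover have "slot_angle * k = 2 * (pi / (4 * real k))"
    using k_pos unfolding slot_angle_def slots_def by (simp add: power2_eq_square)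
  ultimately have "2 * (pi / (4 * real k)) \<le> \<bar>direction v u - direction v w\<bar>" by simp
  moreover have same: "elevation {v, w} = elevation {v, u}" using True elevation_nbr assms by simp
  ultimately show ?thesis
    unfolding arc_tangent_nbr[OF assms(1,2)] arc_tangent_nbr[OF assms(1,3)] same
    using elevation_bounds direction_gap(2)[OF assms]
    by (intro tangent_angle_ge_direction_gap) simp_all
next
  case False
  let ?L = "\<lambda>x. (level v + nbr_index v x) mod k"
  have "1 \<le> \<bar>real (?L u) - real (?L w)\<bar>" using False by linarith
  then have "pi / (4 * real k) * 1 \<le> pi / (4 * real k) * \<bar>real (?L u) - real (?L w)\<bar>"
    by (intro mult_left_mono) simp_all
  moreover have "elevation {v, u} - elevation {v, w} = pi / (4 * real k) * (real (?L u) - real (?L w))"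
    unfolding elevation_nbr[OF assms(1,2)] elevation_nbr[OF assms(1,3)] by (simp add: right_diff_distrib)
  ultimately have "pi / (4 * real k) \<le> \<bar>elevation {v, u} - elevation {v, w}\<bar>"
    by (simp add: abs_mult)
  then show ?thesis
    unfolding arc_tangent_nbr[OF assms(1,2)] arc_tangent_nbr[OF assms(1,3)]
    using elevation_bounds(1) elevation_le_half_pi pi_gt_zero by (intro tangent_angle_ge_elevation_gap) auto
qed

lemma layout_is_drawing:
  "arc_diagram_drawing V E pos elevation"
  "straight_line_drawing V E \<sigma> pos"
  "angular_resolution_ge V E pos elevation (pi / (4 * real k))"
proof -
  show "arc_diagram_drawing V E pos elevation"
    unfolding arc_diagram_drawing_def using inj_on_pos elevation_bounds(1) elevation_le_half_pi by blast
  show "straight_line_drawing V E \<sigma> pos" by (rule straight_line_drawing)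
  show "angular_resolution_ge V E pos elevation (pi / (4 * real k))"
    unfolding angular_resolution_ge_def using nbr_tangents_angle_ge by blast
qed

end

lemma ordered_tree_drawing:
  assumes "ordered_tree V E \<sigma>" "0 < k" "max_degree V E \<le> k\<^sup>2"
  shows "\<exists>p \<alpha>. arc_diagram_drawing V E p \<alpha> \<and> straight_line_drawing V E \<sigma> p \<and>
    angular_resolution_ge V E p \<alpha> (pi / (4 * real k))"
proof -
  have tree: "is_tree V E" and rot: "is_rotation_system V E \<sigma>"
    using assms(1) unfolding ordered_tree_def by simp_all
  then obtain r where "r \<in> V" unfolding is_tree_def by blast
  have "finite V" using tree unfolding is_tree_def by blast
  have "card (nbrs E v) \<le> k\<^sup>2" if "v \<in> V" for v
    using Max_ge[OF finite_imageI[OF \<open>finite V\<close>] imageI[OF that, of "\<lambda>v. card (nbrs E v)"]] assms(3)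
    unfolding max_degree_def by linarith
  then interpret tree_layout V E r \<sigma> k
    using tree rot \<open>r \<in> V\<close> assms(2) by unfold_locales auto
  show ?thesis using layout_is_drawing by blast
qed

lemma angular_resolution_ge_mono:
  "angular_resolution_ge V E p \<alpha> r \<Longrightarrow> r' \<le> r \<Longrightarrow> angular_resolution_ge V E p \<alpha> r'"
  unfolding angular_resolution_ge_def by force

lemma nat_ceiling_sqrt:
  fixes d :: nat
  assumes "1 \<le> d"
  shows "0 < nat \<lceil>sqrt d\<rceil>" "d \<le> (nat \<lceil>sqrt d\<rceil>)\<^sup>2" "real (nat \<lceil>sqrt d\<rceil>) \<le> 2 * sqrt d"
proof -
  have s: "1 \<le> sqrt d" using assms by simp
  have k: "real (nat \<lceil>sqrt d\<rceil>) = of_int \<lceil>sqrt d\<rceil>" using s by simp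
  show "0 < nat \<lceil>sqrt d\<rceil>" using s by simp
  have "sqrt d \<le> real (nat \<lceil>sqrt d\<rceil>)" unfolding k by simp
  then have "(sqrt d)\<^sup>2 \<le> (real (nat \<lceil>sqrt d\<rceil>))\<^sup>2" using s by (intro power_mono) auto
  then have "real d \<le> real ((nat \<lceil>sqrt d\<rceil>)\<^sup>2)" by (simp only: real_sqrt_pow2 of_nat_0_le_iff of_nat_power)
  then show "d \<le> (nat \<lceil>sqrt d\<rceil>)\<^sup>2" by (simp only: of_nat_le_iff)
  show "real (nat \<lceil>sqrt d\<rceil>) \<le> 2 * sqrt d" unfolding k using s by linarith
qed

theorem corollary3:
  shows "\<exists>c::real > 0. \<forall>(V::nat set) E \<sigma>.
     ordered_tree V E \<sigma> \<and> max_degree V E \<ge> 1 \<longrightarrow>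
     (\<exists>p \<alpha>. arc_diagram_drawing V E p \<alpha> \<and> straight_line_drawing V E \<sigma> p \<and>
        angular_resolution_ge V E p \<alpha> (c / sqrt (real (max_degree V E))))"
proof (intro exI[of _ "pi / 8"] conjI allI impI)
  fix V :: "nat set" and E \<sigma>
  assume H: "ordered_tree V E \<sigma> \<and> max_degree V E \<ge> 1"
  define d where "d = max_degree V E"
  define k where "k = nat \<lceil>sqrt d\<rceil>"
  have k: "0 < k" "d \<le> k\<^sup>2" "real k \<le> 2 * sqrt d"
    using nat_ceiling_sqrt H unfolding k_def d_def by auto
  obtain p \<alpha> where drawing: "arc_diagram_drawing V E p \<alpha>" "straight_line_drawing V E \<sigma> p"
      "angular_resolution_ge V E p \<alpha> (pi / (4 * real k))"
    using ordered_tree_drawing H k(1,2) unfolding d_def by blast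
  have "pi / 8 / sqrt d \<le> pi / (4 * real k)"
    using k H unfolding d_def by (simp add: field_simps)
  then show "\<exists>p \<alpha>. arc_diagram_drawing V E p \<alpha> \<and> straight_line_drawing V E \<sigma> p \<and>
      angular_resolution_ge V E p \<alpha> (pi / 8 / sqrt (real (max_degree V E)))"
    using drawing angular_resolution_ge_mono unfolding d_def by blast
qed simp

end
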